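(* Assume the symmetric interference model with types with type partition $\Pi$ whose parts have sizes divisible by $r$, fix $K>0$, and suppose $|f_\pi(u)-f_\pi(u')|\le K\left|\frac a{a+b}-\frac c{c+d}\right|$ for all $\pi\in\Pi$ and $u=(a,b),u'=(c,d)\in\mathcal B_\pi$. Let $T=T_\Pi$. Then $$|\mathbb E_T\hat t_{\mathrm{Neyman}}-\bar t|\le\frac{K|\Pi|}{n},$$ $$\sqrt{\mathbb E_T(\hat t_{\mathrm{Neyman}}-\bar t)^2}\le\frac1{rn}\sum_{v\in V(G)}\frac{4K}{\sqrt{d(v)}}+\frac K{pqn}\sum_{v\in V(G)}\frac{(r-1)|\Pi(v)\cap\mathcal N(v)|}{(|\Pi(v)|-1)\,d(v)}+\frac{\sigma\sqrt{2r}}{\sqrt{pqn}}.$$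
   Context: Let $n,p,q$ be positive integers and $r=p+q$. Let $G$ be a finite simple graph, $|V(G)|=rn$, no isolated vertices; $\mathcal N(v)$, $d(v)$ neighbor set and degree. For each $v$, $x_v,t_v\in\mathbb R$ and $f_v:2^{\mathcal N(v)}\to\mathbb R$ with $f_v(\emptyset)=0$; outcomes $y_v=x_v+\mathbf 1_T(v)t_v+f_v(T\cap\mathcal N(v))$; $\bar t=\frac1{rn}\sum_vt_v$. $\sigma_T(v)=q$ if $v\in T$, $-p$ otherwise; for $|T|=pn$, the Neyman estimator is $\hat t_{\mathrm{Neyman}}=\frac1{pqn}\sum_v\sigma_T(v)y_v$. Symmetric interference model with types: $\Pi$ a partition of $V(G)$, $\Pi(v)$ the part containing $v$, $\mathcal B_\pi=\{(a,b)\in\mathbb Z^2_{\ge0}:a+b=d(v)\text{ for some }v\in\pi\}$, $f_\pi:\mathcal B_\pi\to\mathbb R$, and $f_v(S)=f_{\Pi(v)}(|S|,|\mathcal N(v)\setminus S|)$. $T_\Pi$: independently for each $\pi$, $T_\pi$ uniform among subsets of $\pi$ of size $p|\pi|/r$; $T_\Pi=\bigcup_\pi T_\pi$. $x_\pi,t_\pi$ are the averages of $x_v,t_v$ over $v\in\pi$; $\epsilon_v=x_v-x_{\Pi(v)}+\frac qr(t_v-t_{\Pi(v)})$; $\sigma^2=\frac1{rn}\sum_v\epsilon_v^2$, $\sigma\ge 0$. *)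

theory Defs
  imports Complex_Main "HOL-Library.Disjoint_Sets"
begin

definition simple_graph :: "'a set \<Rightarrow> ('a \<Rightarrow> 'a \<Rightarrow> bool) \<Rightarrow> bool" where
  "simple_graph V E \<longleftrightarrow> finite V \<and> (\<forall>u v. E u v \<longrightarrow> u \<in> V \<and> v \<in> V)
      \<and> (\<forall>u v. E u v \<longrightarrow> E v u) \<and> (\<forall>v. \<not> E v v)"

definition nbhd :: "'a set \<Rightarrow> ('a \<Rightarrow> 'a \<Rightarrow> bool) \<Rightarrow> 'a \<Rightarrow> 'a set" where
  "nbhd V E v = {u \<in> V. E v u}"

definition deg :: "'a set \<Rightarrow> ('a \<Rightarrow> 'a \<Rightarrow> bool) \<Rightarrow> 'a \<Rightarrow> nat" where
  "deg V E v = card (nbhd V E v)"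

definition part_of :: "'a set set \<Rightarrow> 'a \<Rightarrow> 'a set" where
  "part_of P v = (THE \<pi>. \<pi> \<in> P \<and> v \<in> \<pi>)"

definition Bset :: "'a set \<Rightarrow> ('a \<Rightarrow> 'a \<Rightarrow> bool) \<Rightarrow> 'a set \<Rightarrow> (nat \<times> nat) set" where
  "Bset V E \<pi> = {(a, b). \<exists>v\<in>\<pi>. a + b = deg V E v}"

definition outcome :: "'a set \<Rightarrow> ('a \<Rightarrow> 'a \<Rightarrow> bool) \<Rightarrow> 'a set set \<Rightarrow> ('a \<Rightarrow> real) \<Rightarrow> ('a \<Rightarrow> real)
    \<Rightarrow> ('a set \<Rightarrow> nat \<Rightarrow> nat \<Rightarrow> real) \<Rightarrow> 'a set \<Rightarrow> 'a \<Rightarrow> real" where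
  "outcome V E P x t f T v = x v + (if v \<in> T then t v else 0)
      + f (part_of P v) (card (T \<inter> nbhd V E v)) (card (nbhd V E v - T))"

definition sgn_T :: "nat \<Rightarrow> nat \<Rightarrow> 'a set \<Rightarrow> 'a \<Rightarrow> real" where
  "sgn_T p q T v = (if v \<in> T then real q else - real p)"

definition neyman :: "'a set \<Rightarrow> ('a \<Rightarrow> 'a \<Rightarrow> bool) \<Rightarrow> 'a set set \<Rightarrow> nat \<Rightarrow> nat \<Rightarrow> nat
    \<Rightarrow> ('a \<Rightarrow> real) \<Rightarrow> ('a \<Rightarrow> real) \<Rightarrow> ('a set \<Rightarrow> nat \<Rightarrow> nat \<Rightarrow> real) \<Rightarrow> 'a set \<Rightarrow> real" where
  "neyman V E P n p q x t f T =
     (1 / (real p * real q * real n)) * (\<Sum>v\<in>V. sgn_T p q T v * outcome V E P x t f T v)"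

(* T_Pi is the uniform distribution on this finite set (the independent product
   of uniform choices in each part is exactly uniform on this product set). *)
definition stratified_designs :: "'a set \<Rightarrow> 'a set set \<Rightarrow> nat \<Rightarrow> nat \<Rightarrow> 'a set set" where
  "stratified_designs V P p r =
     {T. T \<subseteq> V \<and> (\<forall>\<pi>\<in>P. r * card (T \<inter> \<pi>) = p * card \<pi>)}"

definition E_T :: "'a set \<Rightarrow> 'a set set \<Rightarrow> nat \<Rightarrow> nat \<Rightarrow> ('a set \<Rightarrow> real) \<Rightarrow> real" where
  "E_T V P p r g = (\<Sum>T\<in>stratified_designs V P p r. g T) / real (card (stratified_designs V P p r))"

definition avg_on :: "'a set \<Rightarrow> ('a \<Rightarrow> real) \<Rightarrow> real" where
  "avg_on A g = (\<Sum>v\<in>A. g v) / real (card A)"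

end

theory Submission
  imports Defs "HOL-Analysis.L2_Norm" "HOL-Combinatorics.Transposition"
begin

text \<open>
  The error of the Neyman estimator is \<open>(L T + I T) / (p q n)\<close>, with a linear part
  \<open>L T = \<Sum>v. \<sigma>_T(v) \<epsilon>_v\<close> and an interference part \<open>I T = \<Sum>v. \<sigma>_T(v) (f_v(T) - c_\<Pi>(v))\<close>, where
  \<open>|f_\<pi>(a, b) - c_\<pi>| \<le> K |a/(a+b) - p/r|\<close>; constants per part drop out because the signs sum
  to zero on every part. Transposing two vertices of a part maps designs to designs, so the design
  is exchangeable inside each part. This gives the low moments of the signs: mean zero,
  correlation \<open>-p q / (|\<pi>| - 1)\<close> inside a part, zero across parts, and explicit third moments.

  For the bias only \<open>I\<close> matters: transposing \<open>v\<close> with each other vertex of its part expresses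
  \<open>E \<sigma>_T(v) f_v(T)\<close> through increments of \<open>f_v\<close>, which are at most \<open>K / d(v)\<close> and vanish unless the
  other vertex is a neighbour. For the variance, Minkowski's inequality separates the terms:
  \<open>L\<close> has second moment at most \<open>2 p q \<Sum> \<epsilon>\<^sup>2\<close>, and the summand of \<open>I\<close> at \<open>v\<close> is at most
  \<open>K / (r d(v)) |\<sigma>_T(v)| |\<Sum>u\<in>\<N>(v). \<sigma>_T(u)|\<close>, whose second moment the moment identities control.
\<close>

lemma sqrt_moment_bound:
  fixes p q d x :: real
  assumes p: "p \<ge> 1" and q: "q \<ge> 1" and d: "d \<ge> 1" and x: "x \<ge> 0"
  shows "sqrt ((p * q)\<^sup>2 * d + x * ((q - p)\<^sup>2 * p * q))
    \<le> 4 * (p * q) * sqrt d + (p + q) * (p + q - 1) * x"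
proof -
  define s where "s = sqrt d"
  define c where "c = (p + q) * (p + q - 1)"
  have s: "s \<ge> 1" "s\<^sup>2 = d" using d by (auto simp: s_def)
  have pq: "p * q \<ge> 1" using mult_mono[OF p q] p by simp
  have c: "c \<ge> 0" using p q by (simp add: c_def)
  have "(q - p)\<^sup>2 \<le> (p + q)\<^sup>2" using p q by (simp add: power2_eq_square algebra_simps)
  also have "\<dots> \<le> 8 * c"
  proof -
    have "0 \<le> (p + q) * (7 * (p + q) - 8)" using p q by simp
    then show ?thesis by (simp add: c_def power2_eq_square algebra_simps)
  qed
  also have "\<dots> \<le> 8 * c * s" using c s by (simp add: mult_le_cancel_left1)
  finally have "(q - p)\<^sup>2 * (p * q * x) \<le> 8 * c * s * (p * q * x)"
    using pq x by (intro mult_right_mono) simp_all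
  moreover have "0 \<le> (c * x)\<^sup>2" "0 \<le> (p * q * s)\<^sup>2" by simp_all
  ultimately have "(p * q)\<^sup>2 * d + x * ((q - p)\<^sup>2 * p * q) \<le> (4 * (p * q) * s + c * x)\<^sup>2"
    unfolding s(2)[symmetric] by (simp add: power2_eq_square algebra_simps)
  then have "sqrt ((p * q)\<^sup>2 * d + x * ((q - p)\<^sup>2 * p * q)) \<le> 4 * (p * q) * s + c * x"
    using pq s c x by (simp add: real_le_lsqrt real_sqrt_le_iff)
  then show ?thesis by (simp add: s_def c_def)
qed

lemma L2_set_sum_le:
  "finite I \<Longrightarrow> L2_set (\<lambda>a. \<Sum>i\<in>I. f i a) A \<le> (\<Sum>i\<in>I. L2_set (f i) A)"
proof (induction I rule: finite_induct)
  case (insert i I)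
  have "L2_set (\<lambda>a. \<Sum>i\<in>insert i I. f i a) A = L2_set (\<lambda>a. f i a + (\<Sum>i\<in>I. f i a)) A"
    using insert by simp
  also have "\<dots> \<le> L2_set (f i) A + L2_set (\<lambda>a. \<Sum>i\<in>I. f i a) A"
    by (rule L2_set_triangle_ineq)
  finally show ?case using insert by simp
qed (simp add: L2_set_def)

lemma sgn_T_transpose_image:
  "sgn_T p q (transpose a b ` T) y = sgn_T p q T (transpose a b y)"
  by (simp add: sgn_T_def in_transpose_image_iff)

lemma sgn_T_square: "(sgn_T p q T u)\<^sup>2 = real p * real q + (real q - real p) * sgn_T p q T u"
  by (simp add: sgn_T_def power2_eq_square algebra_simps)

lemma sum_sgn_T_eq_card:
  assumes "finite A"
  shows "(\<Sum>u\<in>A. sgn_T p q T u) = real (p + q) * real (card (T \<inter> A)) - real p * real (card A)"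
proof -
  have "(\<Sum>u\<in>A. sgn_T p q T u) = (\<Sum>u\<in>A. real (p + q) * (if u \<in> T then 1 else 0) - real p)"
    by (rule sum.cong) (auto simp: sgn_T_def)
  also have "\<dots> = real (p + q) * real (card (T \<inter> A)) - real p * real (card A)"
    using assms by (simp add: sum_subtractf sum_distrib_left[symmetric] sum.If_cases Int_commute)
  finally show ?thesis .
qed

section \<open>Moments of the signs under a stratified design\<close>

locale stratified_design =
  fixes V :: "'a set" and P :: "'a set set" and p q r :: nat
  assumes finite_V: "finite V" and partition: "partition_on V P"
    and p_pos: "p > 0" and q_pos: "q > 0" and r_eq: "r = p + q"
    and r_dvd_card: "\<forall>\<pi>\<in>P. r dvd card \<pi>"
begin

abbreviation "\<D> \<equiv> stratified_designs V P p r"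
abbreviation "\<sigma> T v \<equiv> sgn_T p q T v"
abbreviation "N \<equiv> real (card \<D>)"

lemma part_subset: "\<pi> \<in> P \<Longrightarrow> \<pi> \<subseteq> V"
  using partition partition_onD1 by blast

lemma finite_part: "\<pi> \<in> P \<Longrightarrow> finite \<pi>"
  using part_subset finite_V finite_subset by blast

lemma part_unique: "\<pi> \<in> P \<Longrightarrow> \<pi>' \<in> P \<Longrightarrow> x \<in> \<pi> \<Longrightarrow> x \<in> \<pi>' \<Longrightarrow> \<pi> = \<pi>'"
  using partition partition_onD2 disjointD by blast

lemma part_of_eq: "\<pi> \<in> P \<Longrightarrow> v \<in> \<pi> \<Longrightarrow> part_of P v = \<pi>"
  unfolding part_of_def by (rule the_equality) (auto dest: part_unique)

lemma part_of_in: "v \<in> V \<Longrightarrow> part_of P v \<in> P" and mem_part_of: "v \<in> V \<Longrightarrow> v \<in> part_of P v"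
proof -
  assume "v \<in> V"
  then obtain \<pi> where "\<pi> \<in> P" "v \<in> \<pi>" using partition_onD1[OF partition] by blast
  then show "part_of P v \<in> P" "v \<in> part_of P v" using part_of_eq by simp_all
qed

lemma r_ge_2: "r \<ge> 2"
  using p_pos q_pos r_eq by simp

lemma card_part_ge: "\<pi> \<in> P \<Longrightarrow> card \<pi> \<ge> r"
  using r_dvd_card finite_part partition_onD3[OF partition]
  by (metis card_gt_0_iff dvd_imp_le)

lemma card_part_minus_1_pos: "\<pi> \<in> P \<Longrightarrow> real (card \<pi>) - 1 > 0"
  using card_part_ge r_ge_2 by fastforce

lemma finite_designs: "finite \<D>"
proof (rule finite_subset)
  show "\<D> \<subseteq> Pow V" by (auto simp: stratified_designs_def)
qed (simp add: finite_V)

lemma designs_nonempty: "\<D> \<noteq> {}"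
proof -
  have "\<exists>S. S \<subseteq> \<pi> \<and> r * card S = p * card \<pi>" if \<pi>: "\<pi> \<in> P" for \<pi>
  proof -
    obtain k where k: "card \<pi> = r * k" using r_dvd_card \<pi> by blast
    then have "p * k \<le> card \<pi>" using r_eq by simp
    then obtain S where "S \<subseteq> \<pi>" "card S = p * k" by (meson obtain_subset_with_card_n)
    then show ?thesis using k by (intro exI[of _ S]) simp
  qed
  then obtain S where S: "\<And>\<pi>. \<pi> \<in> P \<Longrightarrow> S \<pi> \<subseteq> \<pi> \<and> r * card (S \<pi>) = p * card \<pi>"
    by metis
  have "\<Union>(S ` P) \<inter> \<pi> = S \<pi>" if \<pi>: "\<pi> \<in> P" for \<pi>
  proof
    show "\<Union>(S ` P) \<inter> \<pi> \<subseteq> S \<pi>"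
    proof
      fix v assume "v \<in> \<Union>(S ` P) \<inter> \<pi>"
      then obtain \<pi>' where "\<pi>' \<in> P" "v \<in> S \<pi>'" "v \<in> \<pi>" by blast
      then show "v \<in> S \<pi>" using S \<pi> part_unique[of \<pi> \<pi>' v] by blast
    qed
  qed (use S \<pi> in blast)
  moreover have "\<Union>(S ` P) \<subseteq> V" using S part_subset by blast
  ultimately have "\<Union>(S ` P) \<in> \<D>" using S by (simp add: stratified_designs_def)
  then show ?thesis by blast
qed

lemma card_designs_pos: "N > 0"
  using finite_designs designs_nonempty by (simp add: card_gt_0_iff)

lemma transpose_mem_part_iff:
  assumes "\<pi>' \<in> P" "a \<in> \<pi>'" "b \<in> \<pi>'" "\<pi> \<in> P"
  shows "transpose a b x \<in> \<pi> \<longleftrightarrow> x \<in> \<pi>"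
  using assms part_unique by (cases "x = a"; cases "x = b") auto

lemma transpose_image_in_designs:
  assumes \<pi>: "\<pi> \<in> P" "a \<in> \<pi>" "b \<in> \<pi>" and T: "T \<in> \<D>"
  shows "transpose a b ` T \<in> \<D>"
proof -
  have "transpose a b ` T \<subseteq> V"
    using T \<pi> part_subset by (auto simp: stratified_designs_def transpose_def)
  moreover have "card (transpose a b ` T \<inter> \<pi>') = card (T \<inter> \<pi>')" if "\<pi>' \<in> P" for \<pi>'
  proof -
    have "transpose a b ` T \<inter> \<pi>' = transpose a b ` (T \<inter> \<pi>')"
      using transpose_mem_part_iff[OF \<pi> that] by auto
    then show ?thesis by (simp add: card_image)
  qed
  ultimately show ?thesis using T by (simp add: stratified_designs_def)
qed

lemma sum_designs_transpose:
  assumes "\<pi> \<in> P" "a \<in> \<pi>" "b \<in> \<pi>"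
  shows "(\<Sum>T\<in>\<D>. g T) = (\<Sum>T\<in>\<D>. g (transpose a b ` T))"
  by (rule sum.reindex_bij_witness[of \<D> "(`) (transpose a b)" "(`) (transpose a b)"])
    (auto simp: image_image intro: transpose_image_in_designs[OF assms])

lemma sgn_T_transpose_image_other:
  "\<pi> \<in> P \<Longrightarrow> a \<in> \<pi> \<Longrightarrow> b \<in> \<pi> \<Longrightarrow> u \<notin> \<pi> \<Longrightarrow> \<sigma> (transpose a b ` T) u = \<sigma> T u"
  by (metis sgn_T_transpose_image transpose_apply_other)

lemma sum_sgn_T_part:
  assumes T: "T \<in> \<D>" and \<pi>: "\<pi> \<in> P"
  shows "(\<Sum>v\<in>\<pi>. \<sigma> T v) = 0"
proof -
  have "real r * real (card (T \<inter> \<pi>)) = real p * real (card \<pi>)"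
    using T \<pi> by (simp add: stratified_designs_def flip: of_nat_mult)
  then show ?thesis using sum_sgn_T_eq_card[OF finite_part[OF \<pi>]] r_eq by simp
qed

text \<open>Exchangeability: swapping any two vertices of \<open>\<pi> - F\<close> preserves both \<open>\<D>\<close> and \<open>g\<close>,
  so all \<open>w \<in> \<pi> - F\<close> give the same sum, and their total is fixed by \<open>\<Sum>v\<in>\<pi>. \<sigma> T v = 0\<close>.\<close>

lemma card_mult_sum_sgn_T_invariant:
  assumes \<pi>: "\<pi> \<in> P" and F: "F \<subseteq> \<pi>" and w: "w \<in> \<pi> - F"
    and invariant: "\<And>a b T. a \<in> \<pi> - F \<Longrightarrow> b \<in> \<pi> - F \<Longrightarrow> T \<in> \<D> \<Longrightarrow> g (transpose a b ` T) = g T"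
  shows "real (card (\<pi> - F)) * (\<Sum>T\<in>\<D>. \<sigma> T w * g T) = - (\<Sum>T\<in>\<D>. g T * (\<Sum>x\<in>F. \<sigma> T x))"
proof -
  have same: "(\<Sum>T\<in>\<D>. \<sigma> T w' * g T) = (\<Sum>T\<in>\<D>. \<sigma> T w * g T)" if w': "w' \<in> \<pi> - F" for w'
  proof -
    have "(\<Sum>T\<in>\<D>. \<sigma> T w * g T) = (\<Sum>T\<in>\<D>. \<sigma> (transpose w w' ` T) w * g (transpose w w' ` T))"
      using sum_designs_transpose[OF \<pi>, of w w'] w w' by blast
    also have "\<dots> = (\<Sum>T\<in>\<D>. \<sigma> T w' * g T)"
      using invariant w w' by (intro sum.cong) (auto simp: sgn_T_transpose_image)
    finally show ?thesis ..
  qed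
  have "real (card (\<pi> - F)) * (\<Sum>T\<in>\<D>. \<sigma> T w * g T) = (\<Sum>w'\<in>\<pi> - F. \<Sum>T\<in>\<D>. \<sigma> T w' * g T)"
    by (simp add: same)
  also have "\<dots> = (\<Sum>T\<in>\<D>. g T * (\<Sum>w'\<in>\<pi> - F. \<sigma> T w'))"
    by (subst sum.swap) (simp add: sum_distrib_left mult.commute)
  also have "\<dots> = (\<Sum>T\<in>\<D>. g T * - (\<Sum>x\<in>F. \<sigma> T x))"
    using finite_part[OF \<pi>] F sum_sgn_T_part[OF _ \<pi>] by (intro sum.cong) (simp_all add: sum_diff)
  finally show ?thesis by (simp add: sum_negf)
qed

lemma sum_sgn_T_mult_invariant_eq_0:
  assumes \<pi>: "\<pi> \<in> P" and w: "w \<in> \<pi>"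
    and invariant: "\<And>a b T. a \<in> \<pi> \<Longrightarrow> b \<in> \<pi> \<Longrightarrow> T \<in> \<D> \<Longrightarrow> g (transpose a b ` T) = g T"
  shows "(\<Sum>T\<in>\<D>. \<sigma> T w * g T) = 0"
proof -
  have "real (card \<pi>) * (\<Sum>T\<in>\<D>. \<sigma> T w * g T) = 0"
    using card_mult_sum_sgn_T_invariant[OF \<pi>, of "{}" w g] w invariant by simp
  moreover have "card \<pi> > 0" using finite_part[OF \<pi>] w by (auto simp: card_gt_0_iff)
  ultimately show ?thesis by simp
qed

lemma sum_sgn_T: "u \<in> V \<Longrightarrow> (\<Sum>T\<in>\<D>. \<sigma> T u) = 0"
  using sum_sgn_T_mult_invariant_eq_0[of "part_of P u" u "\<lambda>T. 1"] part_of_in mem_part_of by simp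

lemma sum_sgn_T_square: "u \<in> V \<Longrightarrow> (\<Sum>T\<in>\<D>. (\<sigma> T u)\<^sup>2) = real p * real q * N"
  by (simp add: sgn_T_square sum.distrib sum_distrib_left[symmetric] sum_sgn_T)

lemma sum_sgn_T_mult_other_part:
  assumes w: "w \<in> V" and u: "u \<notin> part_of P w"
  shows "(\<Sum>T\<in>\<D>. \<sigma> T w * \<sigma> T u) = 0"
  using part_of_in[OF w] mem_part_of[OF w]
  by (rule sum_sgn_T_mult_invariant_eq_0) (simp add: sgn_T_transpose_image_other[OF part_of_in[OF w] _ _ u])

lemma sum_sgn_T_mult_same_part:
  assumes \<pi>: "\<pi> \<in> P" and u: "u \<in> \<pi>" and w: "w \<in> \<pi>" and "u \<noteq> w"
  shows "(\<Sum>T\<in>\<D>. \<sigma> T w * \<sigma> T u) = - real p * real q * N / (real (card \<pi>) - 1)"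
proof -
  have "real (card (\<pi> - {u})) * (\<Sum>T\<in>\<D>. \<sigma> T w * \<sigma> T u) = - (\<Sum>T\<in>\<D>. \<sigma> T u * (\<Sum>x\<in>{u}. \<sigma> T x))"
    by (rule card_mult_sum_sgn_T_invariant[OF \<pi>]) (use assms in \<open>auto simp: sgn_T_transpose_image\<close>)
  moreover have "real (card (\<pi> - {u})) = real (card \<pi>) - 1"
    using u finite_part[OF \<pi>] card_part_ge[OF \<pi>] r_ge_2 by (simp add: of_nat_diff)
  moreover have "(\<Sum>T\<in>\<D>. \<sigma> T u * \<sigma> T u) = real p * real q * N"
    using sum_sgn_T_square[of u] part_subset[OF \<pi>] u by (auto simp: power2_eq_square)
  ultimately show ?thesis
    using card_part_minus_1_pos[OF \<pi>] by (simp add: field_simps)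
qed

lemma sum_sgn_T_triple_same_part:
  assumes \<pi>: "\<pi> \<in> P" and "u \<in> \<pi>" "v \<in> \<pi>" "w \<in> \<pi>" "u \<noteq> v" "u \<noteq> w" "v \<noteq> w"
  shows "(\<Sum>T\<in>\<D>. \<sigma> T w * (\<sigma> T u * \<sigma> T v))
    = 2 * (real q - real p) * real p * real q * N / ((real (card \<pi>) - 1) * (real (card \<pi>) - 2))"
proof -
  have uv: "u \<in> V" "v \<in> V" using assms part_subset by auto
  have "card {u, v, w} = 3" using assms by (auto simp: card_insert_if)
  moreover have "card {u, v, w} \<le> card \<pi>" using assms finite_part[OF \<pi>] by (intro card_mono) auto
  ultimately have m: "real (card \<pi>) - 2 > 0" by simp
  have "real (card (\<pi> - {u, v})) * (\<Sum>T\<in>\<D>. \<sigma> T w * (\<sigma> T u * \<sigma> T v))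
      = - (\<Sum>T\<in>\<D>. (\<sigma> T u * \<sigma> T v) * (\<Sum>x\<in>{u, v}. \<sigma> T x))"
    by (rule card_mult_sum_sgn_T_invariant[OF \<pi>]) (use assms in \<open>auto simp: sgn_T_transpose_image\<close>)
  also have "\<dots> = - (\<Sum>T\<in>\<D>. (\<sigma> T u)\<^sup>2 * \<sigma> T v + \<sigma> T u * (\<sigma> T v)\<^sup>2)"
    using assms by (simp add: power2_eq_square algebra_simps)
  also have "\<dots> = - (\<Sum>T\<in>\<D>. real p * real q * \<sigma> T v + real p * real q * \<sigma> T u
      + 2 * (real q - real p) * (\<sigma> T v * \<sigma> T u))"
    by (simp add: sgn_T_square algebra_simps)
  also have "\<dots> = - (2 * (real q - real p) * (\<Sum>T\<in>\<D>. \<sigma> T v * \<sigma> T u))"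
    using sum_sgn_T uv by (simp add: sum.distrib sum_distrib_left[symmetric])
  also have "\<dots> = 2 * (real q - real p) * real p * real q * N / (real (card \<pi>) - 1)"
    using sum_sgn_T_mult_same_part[OF \<pi>, of u v] assms by simp
  also have "real (card (\<pi> - {u, v})) = real (card \<pi>) - 2"
    using assms finite_part[OF \<pi>] m by (simp add: card_Diff_subset of_nat_diff)
  finally have "(real (card \<pi>) - 2) * (\<Sum>T\<in>\<D>. \<sigma> T w * (\<sigma> T u * \<sigma> T v))
      = 2 * (real q - real p) * real p * real q * N / (real (card \<pi>) - 1)" .
  then show ?thesis using m by (simp add: eq_divide_eq mult.commute)
qed

lemma sum_sgn_T_mult_nonpos:
  assumes "u \<in> V" "w \<in> V" "u \<noteq> w"
  shows "(\<Sum>T\<in>\<D>. \<sigma> T u * \<sigma> T w) \<le> 0"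
proof (cases "w \<in> part_of P u")
  case True
  have "(\<Sum>T\<in>\<D>. \<sigma> T u * \<sigma> T w) = - real p * real q * N / (real (card (part_of P u)) - 1)"
    using sum_sgn_T_mult_same_part[OF part_of_in mem_part_of True] assms by (simp add: mult.commute)
  moreover have "real (card (part_of P u)) - 1 > 0"
    using card_part_minus_1_pos[OF part_of_in[OF assms(1)]] .
  ultimately show ?thesis by simp
next
  case False
  then show ?thesis using sum_sgn_T_mult_other_part[OF assms(1)] by simp
qed

lemma sum_square_sum_sgn_T_le:
  assumes A: "A \<subseteq> V"
  shows "(\<Sum>T\<in>\<D>. (\<Sum>u\<in>A. \<sigma> T u)\<^sup>2) \<le> real (card A) * (real p * real q * N)"
proof -
  have finite_A: "finite A" using A finite_V finite_subset by blast
  have "(\<Sum>T\<in>\<D>. (\<Sum>u\<in>A. \<sigma> T u)\<^sup>2) = (\<Sum>u\<in>A. \<Sum>w\<in>A. \<Sum>T\<in>\<D>. \<sigma> T u * \<sigma> T w)"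
    by (simp add: power2_eq_square sum_product sum.swap[of _ \<D>])
  also have "\<dots> \<le> (\<Sum>u\<in>A. real p * real q * N)"
  proof (rule sum_mono)
    fix u assume u: "u \<in> A"
    have "(\<Sum>w\<in>A. \<Sum>T\<in>\<D>. \<sigma> T u * \<sigma> T w)
        = (\<Sum>T\<in>\<D>. (\<sigma> T u)\<^sup>2) + (\<Sum>w\<in>A - {u}. \<Sum>T\<in>\<D>. \<sigma> T u * \<sigma> T w)"
      using finite_A u by (simp add: sum.remove power2_eq_square)
    also have "(\<Sum>w\<in>A - {u}. \<Sum>T\<in>\<D>. \<sigma> T u * \<sigma> T w) \<le> 0"
      by (rule sum_nonpos) (use sum_sgn_T_mult_nonpos u A in auto)
    finally show "(\<Sum>w\<in>A. \<Sum>T\<in>\<D>. \<sigma> T u * \<sigma> T w) \<le> real p * real q * N"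
      using sum_sgn_T_square u A by auto
  qed
  finally show ?thesis by simp
qed

lemma sum_sgn_T_triple_eq_0:
  assumes v: "v \<in> V" and u: "u \<in> V" and w: "w \<in> V"
    and not_both: "\<not> (u \<in> part_of P v \<and> w \<in> part_of P v)"
  shows "(\<Sum>T\<in>\<D>. \<sigma> T v * (\<sigma> T u * \<sigma> T w)) = 0"
proof -
  have lone: "(\<Sum>T\<in>\<D>. \<sigma> T z * (\<sigma> T a * \<sigma> T b)) = 0"
    if "z \<in> V" "a \<notin> part_of P z" "b \<notin> part_of P z" for z a b
    using that part_of_in[OF that(1)] mem_part_of[OF that(1)]
    by (intro sum_sgn_T_mult_invariant_eq_0[of "part_of P z"]) (simp_all add: sgn_T_transpose_image_other)
  have disjoint: "y \<notin> part_of P z" if "y \<in> V" "z \<in> V" "z \<notin> part_of P y" for y z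
    using that part_unique[OF part_of_in part_of_in] mem_part_of by metis
  consider "u \<notin> part_of P v" "w \<notin> part_of P v" | "u \<notin> part_of P v" "w \<in> part_of P v"
    | "u \<in> part_of P v" "w \<notin> part_of P v"
    using not_both by blast
  then show ?thesis
  proof cases
    case 1
    then show ?thesis using lone[OF v] by blast
  next
    case 2
    have "v \<notin> part_of P u" "w \<notin> part_of P u"
      using 2 disjoint[OF v u] part_unique[OF part_of_in part_of_in] mem_part_of v u w by metis+
    then show ?thesis using lone[OF u, of v w] by (simp add: ac_simps)
  next
    case 3
    have "v \<notin> part_of P w" "u \<notin> part_of P w"
      using 3 disjoint[OF v w] part_unique[OF part_of_in part_of_in] mem_part_of v u w by metis+
    then show ?thesis using lone[OF w, of v u] by (simp add: ac_simps)
  qed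
qed

lemma sum_sgn_T_mult_square_same_part:
  assumes \<pi>: "\<pi> \<in> P" and u: "u \<in> \<pi>" and v: "v \<in> \<pi>" and "u \<noteq> v"
  shows "(real q - real p) * (\<Sum>T\<in>\<D>. \<sigma> T v * (\<sigma> T u * \<sigma> T u))
    = - ((real q - real p)\<^sup>2 * real p * real q * N / (real (card \<pi>) - 1))"
proof -
  have "(\<Sum>T\<in>\<D>. \<sigma> T v * (\<sigma> T u * \<sigma> T u))
      = (\<Sum>T\<in>\<D>. real p * real q * \<sigma> T v + (real q - real p) * (\<sigma> T v * \<sigma> T u))"
  proof (rule sum.cong)
    fix T
    have "\<sigma> T u * \<sigma> T u = real p * real q + (real q - real p) * \<sigma> T u"
      using sgn_T_square[of p q T u] by (simp add: power2_eq_square)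
    then have "\<sigma> T v * (\<sigma> T u * \<sigma> T u) = \<sigma> T v * (real p * real q + (real q - real p) * \<sigma> T u)"
      by (simp only:)
    then show "\<sigma> T v * (\<sigma> T u * \<sigma> T u) = real p * real q * \<sigma> T v + (real q - real p) * (\<sigma> T v * \<sigma> T u)"
      by (simp add: algebra_simps)
  qed simp
  also have "\<dots> = (real q - real p) * (- real p * real q * N / (real (card \<pi>) - 1))"
    using sum_sgn_T[of v] part_subset[OF \<pi>] sum_sgn_T_mult_same_part[OF \<pi> u v] v \<open>u \<noteq> v\<close>
    by (auto simp: sum.distrib sum_distrib_left[symmetric])
  finally show ?thesis by (simp add: power2_eq_square)
qed

text \<open>A row of the expansion of \<open>\<sigma> T v * (\<Sum>u\<in>A. \<sigma> T u)\<^sup>2\<close> has diagonal term \<open>-X\<close> and at most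
  \<open>card \<pi> - 2\<close> nonzero off-diagonal terms, each equal to \<open>2 X / (card \<pi> - 2)\<close>.\<close>

lemma row_sum_sgn_T_triple_le:
  assumes A: "A \<subseteq> V" and v: "v \<in> V" "v \<notin> A" and u: "u \<in> A" "u \<in> part_of P v"
  defines "X \<equiv> (real q - real p)\<^sup>2 * real p * real q * N / (real (card (part_of P v)) - 1)"
  shows "(\<Sum>w\<in>A. (real q - real p) * (\<Sum>T\<in>\<D>. \<sigma> T v * (\<sigma> T u * \<sigma> T w))) \<le> X"
proof -
  define \<pi> where "\<pi> = part_of P v"
  define m where "m = real (card \<pi>)"
  have \<pi>: "\<pi> \<in> P" "v \<in> \<pi>" "u \<in> \<pi>" using part_of_in[OF v(1)] mem_part_of[OF v(1)] u by (simp_all add: \<pi>_def)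
  have finite_A: "finite A" using A finite_V finite_subset by blast
  have uv: "u \<noteq> v" using u v by auto
  have X: "X \<ge> 0" using card_part_minus_1_pos[OF \<pi>(1)] card_designs_pos by (simp add: X_def \<pi>_def)
  have off_diagonal: "(real q - real p) * (\<Sum>T\<in>\<D>. \<sigma> T v * (\<sigma> T u * \<sigma> T w))
      = (if w \<in> \<pi> then 2 * X / (m - 2) else 0)" if w: "w \<in> A - {u}" for w
  proof (cases "w \<in> \<pi>")
    case True
    have "u \<noteq> w" "w \<noteq> v" using v w by auto
    with True have "(\<Sum>T\<in>\<D>. \<sigma> T v * (\<sigma> T u * \<sigma> T w))
        = 2 * (real q - real p) * real p * real q * N / ((m - 1) * (m - 2))"
      unfolding m_def by (rule sum_sgn_T_triple_same_part[OF \<pi>(1) \<pi>(3) _ \<pi>(2) _ uv])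
    then show ?thesis using True by (simp add: X_def \<pi>_def m_def power2_eq_square)
  next
    case False
    then show ?thesis using sum_sgn_T_triple_eq_0[OF v(1)] A u w by (auto simp: \<pi>_def)
  qed
  have "(\<Sum>w\<in>A. (real q - real p) * (\<Sum>T\<in>\<D>. \<sigma> T v * (\<sigma> T u * \<sigma> T w)))
      = - X + (\<Sum>w\<in>A - {u}. if w \<in> \<pi> then 2 * X / (m - 2) else 0)"
    using finite_A u sum_sgn_T_mult_square_same_part[OF \<pi>(1) \<pi>(3) \<pi>(2) uv] off_diagonal
    by (simp add: sum.remove X_def \<pi>_def)
  also have "(\<Sum>w\<in>A - {u}. if w \<in> \<pi> then 2 * X / (m - 2) else 0) = real (card ((A - {u}) \<inter> \<pi>)) * (2 * X / (m - 2))"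
    using finite_A by (simp add: sum.inter_restrict[symmetric])
  also have "\<dots> \<le> 2 * X"
  proof (cases "(A - {u}) \<inter> \<pi> = {}")
    case False
    have "card ((A - {u}) \<inter> \<pi>) \<le> card (\<pi> - {u, v})"
      using v finite_part[OF \<pi>(1)] by (intro card_mono) auto
    also have "card (\<pi> - {u, v}) = card \<pi> - 2" using \<pi> uv finite_part[OF \<pi>(1)] by (simp add: card_Diff_subset)
    finally have "real (card ((A - {u}) \<inter> \<pi>)) \<le> m - 2"
      using card_part_ge[OF \<pi>(1)] r_ge_2 by (simp add: m_def)
    moreover have "card ((A - {u}) \<inter> \<pi>) > 0" using False finite_A by (simp add: card_gt_0_iff)
    ultimately have "real (card ((A - {u}) \<inter> \<pi>)) \<le> m - 2" "m - 2 > 0" by linarith+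
    then have "real (card ((A - {u}) \<inter> \<pi>)) * (2 * X / (m - 2)) \<le> (m - 2) * (2 * X / (m - 2))"
      using X by (intro mult_right_mono) simp_all
    then show ?thesis using \<open>m - 2 > 0\<close> by simp
  qed (use X in simp)
  finally show ?thesis by simp
qed

lemma sum_sgn_T_mult_square_sum_le:
  assumes A: "A \<subseteq> V" and v: "v \<in> V" "v \<notin> A"
  shows "(real q - real p) * (\<Sum>T\<in>\<D>. \<sigma> T v * (\<Sum>u\<in>A. \<sigma> T u)\<^sup>2)
    \<le> real (card (A \<inter> part_of P v)) * ((real q - real p)\<^sup>2 * real p * real q * N / (real (card (part_of P v)) - 1))"
proof -
  have finite_A: "finite A" using A finite_V finite_subset by blast
  have "(real q - real p) * (\<Sum>T\<in>\<D>. \<sigma> T v * (\<Sum>u\<in>A. \<sigma> T u)\<^sup>2)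
      = (\<Sum>u\<in>A. \<Sum>w\<in>A. (real q - real p) * (\<Sum>T\<in>\<D>. \<sigma> T v * (\<sigma> T u * \<sigma> T w)))"
  proof -
    have "\<sigma> T v * (\<Sum>u\<in>A. \<sigma> T u)\<^sup>2 = (\<Sum>u\<in>A. \<Sum>w\<in>A. \<sigma> T v * (\<sigma> T u * \<sigma> T w))" for T
      unfolding power2_eq_square sum_product by (simp add: sum_distrib_left)
    then show ?thesis
      by (simp add: sum_distrib_left) (subst sum.swap, simp add: sum.swap[of _ \<D>])
  qed
  also have "\<dots> \<le> (\<Sum>u\<in>A. if u \<in> part_of P v
      then (real q - real p)\<^sup>2 * real p * real q * N / (real (card (part_of P v)) - 1) else 0)"
  proof (rule sum_mono)
    fix u assume u: "u \<in> A"
    show "(\<Sum>w\<in>A. (real q - real p) * (\<Sum>T\<in>\<D>. \<sigma> T v * (\<sigma> T u * \<sigma> T w)))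
      \<le> (if u \<in> part_of P v then (real q - real p)\<^sup>2 * real p * real q * N / (real (card (part_of P v)) - 1) else 0)"
    proof (cases "u \<in> part_of P v")
      case False
      have "(\<Sum>w\<in>A. (real q - real p) * (\<Sum>T\<in>\<D>. \<sigma> T v * (\<sigma> T u * \<sigma> T w))) = 0"
        using sum_sgn_T_triple_eq_0[OF v(1)] u A False by (intro sum.neutral) auto
      then show ?thesis using False by simp
    qed (use row_sum_sgn_T_triple_le[OF A v u] in simp)
  qed
  also have "\<dots> = real (card (A \<inter> part_of P v)) * ((real q - real p)\<^sup>2 * real p * real q * N / (real (card (part_of P v)) - 1))"
    using finite_A by (simp add: sum.inter_restrict[symmetric])
  finally show ?thesis .
qed

lemma sum_sgn_T_square_mult_square_sum_le:
  assumes A: "A \<subseteq> V" and v: "v \<in> V" "v \<notin> A"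
  shows "(\<Sum>T\<in>\<D>. (\<sigma> T v)\<^sup>2 * (\<Sum>u\<in>A. \<sigma> T u)\<^sup>2)
    \<le> N * ((real p * real q)\<^sup>2 * real (card A)
      + real (card (A \<inter> part_of P v)) / (real (card (part_of P v)) - 1) * ((real q - real p)\<^sup>2 * real p * real q))"
proof -
  have "(\<Sum>T\<in>\<D>. (\<sigma> T v)\<^sup>2 * (\<Sum>u\<in>A. \<sigma> T u)\<^sup>2)
      = real p * real q * (\<Sum>T\<in>\<D>. (\<Sum>u\<in>A. \<sigma> T u)\<^sup>2)
        + (real q - real p) * (\<Sum>T\<in>\<D>. \<sigma> T v * (\<Sum>u\<in>A. \<sigma> T u)\<^sup>2)"
  proof -
    have "(\<sigma> T v)\<^sup>2 * (\<Sum>u\<in>A. \<sigma> T u)\<^sup>2 = real p * real q * (\<Sum>u\<in>A. \<sigma> T u)\<^sup>2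
        + (real q - real p) * (\<sigma> T v * (\<Sum>u\<in>A. \<sigma> T u)\<^sup>2)" for T
      by (simp only: sgn_T_square ring_distribs mult.assoc)
    then show ?thesis by (simp only: sum.distrib sum_distrib_left)
  qed
  also have "\<dots> \<le> real p * real q * (real (card A) * (real p * real q * N))
      + real (card (A \<inter> part_of P v)) * ((real q - real p)\<^sup>2 * real p * real q * N / (real (card (part_of P v)) - 1))"
    using sum_square_sum_sgn_T_le[OF A] sum_sgn_T_mult_square_sum_le[OF A v]
    by (intro add_mono mult_left_mono) auto
  also have "\<dots> = N * ((real p * real q)\<^sup>2 * real (card A)
      + real (card (A \<inter> part_of P v)) / (real (card (part_of P v)) - 1) * ((real q - real p)\<^sup>2 * real p * real q))"
    using card_part_minus_1_pos[OF part_of_in[OF v(1)]] by (simp add: field_simps power2_eq_square)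
  finally show ?thesis .
qed

lemma sum_designs_exchange_weight:
  assumes \<pi>: "\<pi> \<in> P" and u: "u \<in> \<pi>" and v: "v \<in> \<pi>" and uv: "u \<noteq> v"
  shows "(\<Sum>T\<in>\<D>. real q * of_bool (u \<in> T \<and> v \<notin> T) + real p * of_bool (v \<in> T \<and> u \<notin> T))
    = N * (real p * real q) * real (card \<pi>) / (real r * (real (card \<pi>) - 1))"
proof -
  have r: "real r > 0" using r_ge_2 by simp
  have weight: "real q * of_bool (u \<in> T \<and> v \<notin> T) + real p * of_bool (v \<in> T \<and> u \<notin> T)
    = ((real q * real q - real p * real p) * \<sigma> T u - real r * (\<sigma> T u * \<sigma> T v) + real p * real q * real r)
      / (real r)\<^sup>2" for T
  proof -
    have "(real r)\<^sup>2 * (real q * of_bool (u \<in> T \<and> v \<notin> T) + real p * of_bool (v \<in> T \<and> u \<notin> T))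
      = (real q * real q - real p * real p) * \<sigma> T u - real r * (\<sigma> T u * \<sigma> T v) + real p * real q * real r"
      by (cases "u \<in> T"; cases "v \<in> T") (auto simp: sgn_T_def r_eq algebra_simps power2_eq_square)
    then show ?thesis using r by (simp add: eq_divide_eq mult.commute)
  qed
  have "(\<Sum>T\<in>\<D>. real q * of_bool (u \<in> T \<and> v \<notin> T) + real p * of_bool (v \<in> T \<and> u \<notin> T))
      = ((real q * real q - real p * real p) * (\<Sum>T\<in>\<D>. \<sigma> T u) - real r * (\<Sum>T\<in>\<D>. \<sigma> T u * \<sigma> T v)
        + real p * real q * real r * N) / (real r)\<^sup>2"
    by (simp only: weight sum_divide_distrib[symmetric] sum.distrib sum_subtractf
        sum_distrib_left[symmetric]) simp
  also have "\<dots> = (real r * (real p * real q * N / (real (card \<pi>) - 1)) + real p * real q * real r * N) / (real r)\<^sup>2"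
    using sum_sgn_T[of u] sum_sgn_T_mult_same_part[OF \<pi> v u uv[symmetric]] u part_subset[OF \<pi>] by auto
  also have "\<dots> = N * (real p * real q) * real (card \<pi>) / (real r * (real (card \<pi>) - 1))"
    using r card_part_minus_1_pos[OF \<pi>] by (simp add: field_simps power2_eq_square)
  finally show ?thesis .
qed

text \<open>Obtained by transposing \<open>v\<close> with each other vertex of its part and using that the signs
  sum to zero on the part.\<close>

lemma card_part_mult_sum_sgn_T:
  assumes \<pi>: "\<pi> \<in> P" and v: "v \<in> \<pi>"
  shows "real (card \<pi>) * (\<Sum>T\<in>\<D>. \<sigma> T v * g T)
    = (\<Sum>u\<in>\<pi> - {v}. \<Sum>T\<in>\<D>. \<sigma> T u * (g (transpose v u ` T) - g T))"
proof -
  have finite_\<pi>: "finite \<pi>" using finite_part[OF \<pi>] .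
  have swapped: "(\<Sum>T\<in>\<D>. \<sigma> T u * g (transpose v u ` T)) = (\<Sum>T\<in>\<D>. \<sigma> T v * g T)"
    if u: "u \<in> \<pi> - {v}" for u
    using sum_designs_transpose[OF \<pi> v, of u "\<lambda>T. \<sigma> T v * g T"] u by (simp add: sgn_T_transpose_image)
  have others: "(\<Sum>u\<in>\<pi> - {v}. \<Sum>T\<in>\<D>. \<sigma> T u * g T) = - (\<Sum>T\<in>\<D>. \<sigma> T v * g T)"
  proof -
    have "(\<Sum>u\<in>\<pi> - {v}. \<Sum>T\<in>\<D>. \<sigma> T u * g T) = (\<Sum>T\<in>\<D>. g T * (\<Sum>u\<in>\<pi> - {v}. \<sigma> T u))"
      by (subst sum.swap) (simp add: sum_distrib_left mult.commute)
    also have "\<dots> = (\<Sum>T\<in>\<D>. g T * - \<sigma> T v)"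
      using sum_sgn_T_part[OF _ \<pi>] finite_\<pi> v by (intro sum.cong) (simp_all add: sum_diff1)
    finally show ?thesis by (simp add: sum_negf mult.commute)
  qed
  have "(\<Sum>u\<in>\<pi> - {v}. \<Sum>T\<in>\<D>. \<sigma> T u * (g (transpose v u ` T) - g T))
      = (\<Sum>u\<in>\<pi> - {v}. \<Sum>T\<in>\<D>. \<sigma> T u * g (transpose v u ` T)) - (\<Sum>u\<in>\<pi> - {v}. \<Sum>T\<in>\<D>. \<sigma> T u * g T)"
    by (simp add: right_diff_distrib sum_subtractf)
  also have "\<dots> = real (card (\<pi> - {v})) * (\<Sum>T\<in>\<D>. \<sigma> T v * g T) + (\<Sum>T\<in>\<D>. \<sigma> T v * g T)"
    by (simp add: swapped others)
  also have "real (card (\<pi> - {v})) = real (card \<pi>) - 1"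
    using finite_\<pi> v card_part_ge[OF \<pi>] r_ge_2 by (simp add: of_nat_diff)
  finally show ?thesis by (simp add: algebra_simps)
qed

lemma sum_sgn_T_mult_part_function:
  assumes T: "T \<in> \<D>"
  shows "(\<Sum>v\<in>V. \<sigma> T v * F (part_of P v)) = 0"
proof -
  have "(\<Sum>v\<in>V. \<sigma> T v * F (part_of P v)) = (\<Sum>\<pi>\<in>P. \<Sum>v\<in>\<pi>. \<sigma> T v * F (part_of P v))"
    using sum.partition[OF finite_V partition] .
  also have "\<dots> = (\<Sum>\<pi>\<in>P. F \<pi> * (\<Sum>v\<in>\<pi>. \<sigma> T v))"
    by (rule sum.cong[OF refl]) (simp add: sum_distrib_left part_of_eq mult.commute)
  finally show ?thesis using sum_sgn_T_part[OF T] by simp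
qed

lemma row_sum_sgn_T_mult_centered:
  assumes centered: "\<And>\<pi>. \<pi> \<in> P \<Longrightarrow> (\<Sum>v\<in>\<pi>. e v) = 0" and u: "u \<in> V"
  shows "(\<Sum>w\<in>V. e u * e w * (\<Sum>T\<in>\<D>. \<sigma> T u * \<sigma> T w))
    = (e u)\<^sup>2 * (real p * real q * N) * (1 + 1 / (real (card (part_of P u)) - 1))"
proof -
  define \<pi> where "\<pi> = part_of P u"
  define Q where "Q = real p * real q * N"
  define m where "m = real (card \<pi>)"
  have \<pi>: "\<pi> \<in> P" "u \<in> \<pi>" using part_of_in[OF u] mem_part_of[OF u] by (simp_all add: \<pi>_def)
  have pair: "(\<Sum>T\<in>\<D>. \<sigma> T u * \<sigma> T w) = (if w \<in> \<pi> then - Q / (m - 1) else 0)"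
    if w: "w \<in> V - {u}" for w
    using sum_sgn_T_mult_same_part[OF \<pi>(1) _ \<pi>(2), of w] sum_sgn_T_mult_other_part[OF u, of w] w
    by (auto simp: Q_def m_def \<pi>_def mult.commute)
  have "(\<Sum>w\<in>V. e u * e w * (\<Sum>T\<in>\<D>. \<sigma> T u * \<sigma> T w))
      = (e u)\<^sup>2 * Q + (\<Sum>w\<in>V - {u}. e u * e w * (\<Sum>T\<in>\<D>. \<sigma> T u * \<sigma> T w))"
    using finite_V u sum_sgn_T_square[OF u] by (simp add: sum.remove power2_eq_square Q_def)
  also have "(\<Sum>w\<in>V - {u}. e u * e w * (\<Sum>T\<in>\<D>. \<sigma> T u * \<sigma> T w))
      = (\<Sum>w\<in>(V - {u}) \<inter> \<pi>. e u * e w * (- Q / (m - 1)))"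
  proof -
    have "(\<Sum>w\<in>V - {u}. e u * e w * (\<Sum>T\<in>\<D>. \<sigma> T u * \<sigma> T w))
        = (\<Sum>w\<in>V - {u}. if w \<in> \<pi> then e u * e w * (- Q / (m - 1)) else 0)"
      using pair by (intro sum.cong) simp_all
    then show ?thesis using finite_V by (simp only: sum.inter_restrict finite_Diff)
  qed
  also have "(V - {u}) \<inter> \<pi> = \<pi> - {u}" using part_subset[OF \<pi>(1)] by auto
  also have "(\<Sum>w\<in>\<pi> - {u}. e u * e w * (- Q / (m - 1))) = e u * (- Q / (m - 1)) * (\<Sum>w\<in>\<pi> - {u}. e w)"
    by (simp only: sum_distrib_left ac_simps)
  also have "(\<Sum>w\<in>\<pi> - {u}. e w) = - e u"
    using centered[OF \<pi>(1)] finite_part[OF \<pi>(1)] \<pi>(2) by (simp add: sum_diff1)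
  finally show ?thesis by (simp add: power2_eq_square algebra_simps Q_def m_def \<pi>_def)
qed

lemma sum_square_sum_sgn_T_mult_le:
  assumes centered: "\<And>\<pi>. \<pi> \<in> P \<Longrightarrow> (\<Sum>v\<in>\<pi>. e v) = 0"
  shows "(\<Sum>T\<in>\<D>. (\<Sum>v\<in>V. \<sigma> T v * e v)\<^sup>2) \<le> 2 * (real p * real q * N) * (\<Sum>v\<in>V. (e v)\<^sup>2)"
proof -
  have "(\<Sum>T\<in>\<D>. (\<Sum>v\<in>V. \<sigma> T v * e v)\<^sup>2) = (\<Sum>u\<in>V. \<Sum>w\<in>V. e u * e w * (\<Sum>T\<in>\<D>. \<sigma> T u * \<sigma> T w))"
  proof -
    have "(\<Sum>v\<in>V. \<sigma> T v * e v)\<^sup>2 = (\<Sum>u\<in>V. \<Sum>w\<in>V. e u * e w * (\<sigma> T u * \<sigma> T w))" for T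
      unfolding power2_eq_square sum_product by (simp add: algebra_simps)
    then show ?thesis by (simp add: sum_distrib_left) (subst sum.swap, simp add: sum.swap[of _ \<D>])
  qed
  also have "\<dots> \<le> (\<Sum>u\<in>V. 2 * (real p * real q * N) * (e u)\<^sup>2)"
  proof (rule sum_mono)
    fix u assume u: "u \<in> V"
    have "1 / (real (card (part_of P u)) - 1) \<le> 1"
      using card_part_ge[OF part_of_in[OF u]] r_ge_2 by simp
    then have "(e u)\<^sup>2 * (real p * real q * N) * (1 + 1 / (real (card (part_of P u)) - 1))
        \<le> (e u)\<^sup>2 * (real p * real q * N) * 2"
      by (intro mult_left_mono) auto
    then show "(\<Sum>w\<in>V. e u * e w * (\<Sum>T\<in>\<D>. \<sigma> T u * \<sigma> T w)) \<le> 2 * (real p * real q * N) * (e u)\<^sup>2"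
      using row_sum_sgn_T_mult_centered[OF centered u] by (simp add: ac_simps)
  qed
  finally show ?thesis by (simp add: sum_distrib_left)
qed

end

section \<open>Lipschitz interference\<close>

locale interference_model = stratified_design V P p q r for V :: "'a set" and P p q r +
  fixes E :: "'a \<Rightarrow> 'a \<Rightarrow> bool" and n :: nat and x t :: "'a \<Rightarrow> real"
    and f :: "'a set \<Rightarrow> nat \<Rightarrow> nat \<Rightarrow> real" and K :: real
  assumes n_pos: "n > 0" and graph: "simple_graph V E"
    and no_isolated: "\<forall>v\<in>V. \<exists>u. E v u" and K_pos: "K > 0"
    and lipschitz: "\<forall>\<pi>\<in>P. \<forall>a b c d. (a, b) \<in> Bset V E \<pi> \<longrightarrow> (c, d) \<in> Bset V E \<pi> \<longrightarrow>
        \<bar>f \<pi> a b - f \<pi> c d\<bar> \<le> K * \<bar>real a / real (a + b) - real c / real (c + d)\<bar>"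
begin

abbreviation "\<N> v \<equiv> nbhd V E v"
abbreviation "dg v \<equiv> deg V E v"

definition interference :: "'a \<Rightarrow> 'a set \<Rightarrow> real" where
  "interference v T = f (part_of P v) (card (T \<inter> \<N> v)) (card (\<N> v - T))"

lemma nbhd_subset: "\<N> v \<subseteq> V"
  by (auto simp: nbhd_def)

lemma finite_nbhd: "finite (\<N> v)"
  using nbhd_subset finite_V finite_subset by blast

lemma not_in_nbhd: "v \<notin> \<N> v"
  using graph by (auto simp: nbhd_def simple_graph_def)

lemma deg_pos:
  assumes v: "v \<in> V"
  shows "dg v > 0"
proof -
  obtain u where "E v u" using no_isolated v by blast
  then have "u \<in> \<N> v" using graph by (auto simp: nbhd_def simple_graph_def)
  then show ?thesis using finite_nbhd by (auto simp: deg_def card_gt_0_iff)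
qed

lemma lipschitz_at:
  "\<pi> \<in> P \<Longrightarrow> (a, b) \<in> Bset V E \<pi> \<Longrightarrow> (c, d) \<in> Bset V E \<pi> \<Longrightarrow>
    \<bar>f \<pi> a b - f \<pi> c d\<bar> \<le> K * \<bar>real a / real (a + b) - real c / real (c + d)\<bar>"
  using lipschitz by blast

lemma card_Int_plus_card_Diff: "card (T \<inter> \<N> v) + card (\<N> v - T) = dg v"
  by (metis Int_commute card_Int_Diff deg_def finite_nbhd)

lemma interference_lipschitz:
  assumes v: "v \<in> V"
  shows "\<bar>interference v T - interference v T'\<bar>
    \<le> K / real (dg v) * \<bar>real (card (T \<inter> \<N> v)) - real (card (T' \<inter> \<N> v))\<bar>"
proof -
  have \<pi>: "part_of P v \<in> P" "v \<in> part_of P v" using part_of_in[OF v] mem_part_of[OF v] .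
  have in_Bset: "(card (S \<inter> \<N> v), card (\<N> v - S)) \<in> Bset V E (part_of P v)" for S
    using \<pi>(2) card_Int_plus_card_Diff by (auto simp: Bset_def)
  have "\<bar>interference v T - interference v T'\<bar>
      \<le> K * \<bar>real (card (T \<inter> \<N> v)) / real (dg v) - real (card (T' \<inter> \<N> v)) / real (dg v)\<bar>"
    using lipschitz_at[OF \<pi>(1) in_Bset in_Bset] by (simp add: interference_def card_Int_plus_card_Diff)
  also have "\<dots> = K / real (dg v) * \<bar>real (card (T \<inter> \<N> v)) - real (card (T' \<inter> \<N> v))\<bar>"
    using K_pos by (simp add: diff_divide_distrib[symmetric] abs_divide)
  finally show ?thesis .
qed

text \<open>\<open>center \<pi>\<close> is the value at \<open>p / r\<close> of the McShane extension of \<open>f \<pi>\<close>, viewed as a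
  \<open>K\<close>-Lipschitz function of the treated fraction \<open>a / (a + b)\<close>.\<close>

lemma center_exists:
  assumes \<pi>: "\<pi> \<in> P"
  shows "\<exists>c. \<forall>a b. (a, b) \<in> Bset V E \<pi> \<longrightarrow> \<bar>f \<pi> a b - c\<bar> \<le> K * \<bar>real a / real (a + b) - real p / real r\<bar>"
proof -
  define B where "B = Bset V E \<pi>"
  define \<phi> where "\<phi> z = f \<pi> (fst z) (snd z) + K * \<bar>real (fst z) / real (fst z + snd z) - real p / real r\<bar>" for z
  have "B \<subseteq> {..card V} \<times> {..card V}"
  proof
    fix z assume "z \<in> B"
    then obtain a b w where "z = (a, b)" "a + b = dg w" by (auto simp: B_def Bset_def)
    moreover have "dg w \<le> card V" unfolding deg_def by (rule card_mono[OF finite_V nbhd_subset])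
    ultimately show "z \<in> {..card V} \<times> {..card V}" by auto
  qed
  then have finite_B: "finite B" using finite_subset by blast
  obtain w where "w \<in> \<pi>" using \<pi> partition_onD3[OF partition] by (metis all_not_in_conv)
  then have "(0, dg w) \<in> B" by (auto simp: B_def Bset_def)
  then have "Min (\<phi> ` B) \<in> \<phi> ` B" using finite_B by (intro Min_in) auto
  then obtain a' b' where ab': "(a', b') \<in> B" "Min (\<phi> ` B) = \<phi> (a', b')" by auto
  show ?thesis
  proof (intro exI[of _ "Min (\<phi> ` B)"] allI impI)
    fix a b assume ab: "(a, b) \<in> Bset V E \<pi>"
    have "Min (\<phi> ` B) \<le> \<phi> (a, b)" using ab finite_B by (simp add: B_def)
    moreover have "f \<pi> a b - f \<pi> a' b' \<le> K * \<bar>real a / real (a + b) - real a' / real (a' + b')\<bar>"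
      using lipschitz_at[OF \<pi> ab] ab'(1) unfolding B_def by (simp add: abs_le_iff)
    moreover have "\<dots> \<le> K * (\<bar>real a / real (a + b) - real p / real r\<bar> + \<bar>real a' / real (a' + b') - real p / real r\<bar>)"
      using K_pos by (intro mult_left_mono) auto
    ultimately show "\<bar>f \<pi> a b - Min (\<phi> ` B)\<bar> \<le> K * \<bar>real a / real (a + b) - real p / real r\<bar>"
      using ab'(2) by (simp add: \<phi>_def algebra_simps abs_le_iff)
  qed
qed

definition center :: "'a set \<Rightarrow> real" where
  "center \<pi> = (SOME c. \<forall>a b. (a, b) \<in> Bset V E \<pi> \<longrightarrow> \<bar>f \<pi> a b - c\<bar> \<le> K * \<bar>real a / real (a + b) - real p / real r\<bar>)"

lemma center_le:
  "\<pi> \<in> P \<Longrightarrow> (a, b) \<in> Bset V E \<pi> \<Longrightarrow> \<bar>f \<pi> a b - center \<pi>\<bar> \<le> K * \<bar>real a / real (a + b) - real p / real r\<bar>"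
  using someI_ex[OF center_exists] unfolding center_def by blast

lemma card_transpose_image_Int:
  assumes A: "finite A" "v \<notin> A" and uv: "u \<noteq> v"
  shows "real (card (transpose v u ` T \<inter> A)) - real (card (T \<inter> A))
    = of_bool (u \<in> A) * (of_bool (v \<in> T) - of_bool (u \<in> T))"
proof -
  have "transpose v u ` T \<inter> A = (if u \<in> A \<and> v \<in> T then insert u (T \<inter> A) else T \<inter> A - {u})"
    using A uv by (auto simp: in_transpose_image_iff transpose_def)
  moreover have "u \<in> T \<inter> A \<Longrightarrow> card (T \<inter> A) > 0"
    using A by (auto simp: card_gt_0_iff)
  ultimately show ?thesis
    using A by (cases "u \<in> A"; cases "u \<in> T"; cases "v \<in> T") (auto simp: of_nat_diff Suc_le_eq)
qed

lemma abs_sgn_T_mult_interference_transpose_le: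
  assumes v: "v \<in> V" and uv: "u \<noteq> v"
  shows "\<bar>\<sigma> T u * (interference v (transpose v u ` T) - interference v T)\<bar>
    \<le> of_bool (u \<in> \<N> v) * (K / real (dg v))
      * (real q * of_bool (u \<in> T \<and> v \<notin> T) + real p * of_bool (v \<in> T \<and> u \<notin> T))"
proof -
  have "\<bar>\<sigma> T u * (interference v (transpose v u ` T) - interference v T)\<bar>
      \<le> \<bar>\<sigma> T u\<bar> * (K / real (dg v)
        * \<bar>real (card (transpose v u ` T \<inter> \<N> v)) - real (card (T \<inter> \<N> v))\<bar>)"
    unfolding abs_mult by (intro mult_left_mono interference_lipschitz[OF v]) simp
  also have "\<dots> = of_bool (u \<in> \<N> v) * (K / real (dg v))
      * (real q * of_bool (u \<in> T \<and> v \<notin> T) + real p * of_bool (v \<in> T \<and> u \<notin> T))"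
    unfolding card_transpose_image_Int[OF finite_nbhd not_in_nbhd uv]
    by (cases "u \<in> T"; cases "v \<in> T") (auto simp: sgn_T_def)
  finally show ?thesis .
qed

lemma abs_sum_sgn_T_mult_interference_transpose_le:
  assumes v: "v \<in> V" and u: "u \<in> part_of P v - {v}"
  shows "\<bar>\<Sum>T\<in>\<D>. \<sigma> T u * (interference v (transpose v u ` T) - interference v T)\<bar>
    \<le> of_bool (u \<in> \<N> v) * (K / real (dg v)
      * (N * (real p * real q) * real (card (part_of P v)) / (real r * (real (card (part_of P v)) - 1))))"
proof -
  have "\<bar>\<Sum>T\<in>\<D>. \<sigma> T u * (interference v (transpose v u ` T) - interference v T)\<bar>
      \<le> (\<Sum>T\<in>\<D>. of_bool (u \<in> \<N> v) * (K / real (dg v))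
        * (real q * of_bool (u \<in> T \<and> v \<notin> T) + real p * of_bool (v \<in> T \<and> u \<notin> T)))"
    by (rule order_trans[OF sum_abs sum_mono]) (use abs_sgn_T_mult_interference_transpose_le[OF v] u in auto)
  also have "\<dots> = of_bool (u \<in> \<N> v) * (K / real (dg v))
      * (\<Sum>T\<in>\<D>. real q * of_bool (u \<in> T \<and> v \<notin> T) + real p * of_bool (v \<in> T \<and> u \<notin> T))"
    by (simp only: sum_distrib_left)
  also have "(\<Sum>T\<in>\<D>. real q * of_bool (u \<in> T \<and> v \<notin> T) + real p * of_bool (v \<in> T \<and> u \<notin> T))
      = N * (real p * real q) * real (card (part_of P v)) / (real r * (real (card (part_of P v)) - 1))"
    using u by (intro sum_designs_exchange_weight[OF part_of_in[OF v] _ mem_part_of[OF v]]) auto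
  finally show ?thesis by (simp only: mult.assoc)
qed

lemma abs_sum_sgn_T_mult_interference_le:
  assumes v: "v \<in> V"
  shows "\<bar>\<Sum>T\<in>\<D>. \<sigma> T v * interference v T\<bar>
    \<le> real (card (\<N> v \<inter> part_of P v)) * (K / real (dg v))
      * (N * (real p * real q) / (real r * (real (card (part_of P v)) - 1)))"
proof -
  define \<pi> where "\<pi> = part_of P v"
  define m where "m = real (card \<pi>)"
  define Y where "Y = K / real (dg v) * (N * (real p * real q) * m / (real r * (m - 1)))"
  have \<pi>: "\<pi> \<in> P" "v \<in> \<pi>" using part_of_in[OF v] mem_part_of[OF v] by (simp_all add: \<pi>_def)
  have m: "m - 1 > 0" using card_part_minus_1_pos[OF \<pi>(1)] by (simp add: m_def)
  have "m * \<bar>\<Sum>T\<in>\<D>. \<sigma> T v * interference v T\<bar> = \<bar>m * (\<Sum>T\<in>\<D>. \<sigma> T v * interference v T)\<bar>"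
    using m by (simp add: abs_mult)
  also have "\<dots> = \<bar>\<Sum>u\<in>\<pi> - {v}. \<Sum>T\<in>\<D>. \<sigma> T u * (interference v (transpose v u ` T) - interference v T)\<bar>"
    unfolding m_def card_part_mult_sum_sgn_T[OF \<pi>] ..
  also have "\<dots> \<le> (\<Sum>u\<in>\<pi> - {v}. of_bool (u \<in> \<N> v) * Y)"
    unfolding Y_def m_def \<pi>_def
    by (rule order_trans[OF sum_abs sum_mono]) (rule abs_sum_sgn_T_mult_interference_transpose_le[OF v])
  also have "\<dots> = real (card (\<N> v \<inter> \<pi>)) * Y"
  proof -
    have "(\<pi> - {v}) \<inter> \<N> v = \<N> v \<inter> \<pi>" using not_in_nbhd[of v] by auto
    then show ?thesis using finite_part[OF \<pi>(1)]
      by (simp add: sum_distrib_right[symmetric] of_bool_def sum.If_cases)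
  qed
  also have "\<dots> = m * (real (card (\<N> v \<inter> \<pi>)) * (K / real (dg v)) * (N * (real p * real q) / (real r * (m - 1))))"
    by (simp add: Y_def algebra_simps)
  finally have "\<bar>\<Sum>T\<in>\<D>. \<sigma> T v * interference v T\<bar>
      \<le> real (card (\<N> v \<inter> \<pi>)) * (K / real (dg v)) * (N * (real p * real q) / (real r * (m - 1)))"
    using m by (simp only: mult_le_cancel_left_pos)
  then show ?thesis by (simp add: \<pi>_def m_def)
qed

lemma abs_interference_minus_center_le:
  assumes v: "v \<in> V"
  shows "\<bar>interference v T - center (part_of P v)\<bar> \<le> K / (real r * real (dg v)) * \<bar>\<Sum>u\<in>\<N> v. \<sigma> T u\<bar>"
proof -
  have \<pi>: "part_of P v \<in> P" "v \<in> part_of P v" using part_of_in[OF v] mem_part_of[OF v] .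
  have d: "real (dg v) > 0" using deg_pos[OF v] by simp
  have r: "real r > 0" using r_ge_2 by simp
  have "(card (T \<inter> \<N> v), card (\<N> v - T)) \<in> Bset V E (part_of P v)"
    using \<pi>(2) card_Int_plus_card_Diff by (auto simp: Bset_def)
  moreover have "real (card (T \<inter> \<N> v)) + real (card (\<N> v - T)) = real (dg v)"
    using card_Int_plus_card_Diff by (metis of_nat_add)
  ultimately have "\<bar>interference v T - center (part_of P v)\<bar>
      \<le> K * \<bar>real (card (T \<inter> \<N> v)) / real (dg v) - real p / real r\<bar>"
    using center_le[OF \<pi>(1)] by (fastforce simp: interference_def)
  also have "real (card (T \<inter> \<N> v)) / real (dg v) - real p / real r = (\<Sum>u\<in>\<N> v. \<sigma> T u) / (real r * real (dg v))"
    using sum_sgn_T_eq_card[OF finite_nbhd, of p q T v] d r r_eq by (simp add: deg_def field_simps)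
  finally show ?thesis using d r K_pos by (simp add: abs_divide)
qed

lemma sum_square_sgn_T_mult_deviation_le:
  assumes v: "v \<in> V"
  shows "(\<Sum>T\<in>\<D>. (\<sigma> T v * (interference v T - center (part_of P v)))\<^sup>2)
    \<le> (K / (real r * real (dg v)))\<^sup>2 * (N * ((real p * real q)\<^sup>2 * real (dg v)
      + real (card (\<N> v \<inter> part_of P v)) / (real (card (part_of P v)) - 1) * ((real q - real p)\<^sup>2 * real p * real q)))"
proof -
  have "(\<Sum>T\<in>\<D>. (\<sigma> T v * (interference v T - center (part_of P v)))\<^sup>2)
      \<le> (\<Sum>T\<in>\<D>. (K / (real r * real (dg v)))\<^sup>2 * ((\<sigma> T v)\<^sup>2 * (\<Sum>u\<in>\<N> v. \<sigma> T u)\<^sup>2))"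
  proof (rule sum_mono)
    fix T
    have "\<bar>\<sigma> T v * (interference v T - center (part_of P v))\<bar>
        \<le> \<bar>\<sigma> T v\<bar> * (K / (real r * real (dg v)) * \<bar>\<Sum>u\<in>\<N> v. \<sigma> T u\<bar>)"
      unfolding abs_mult by (intro mult_left_mono abs_interference_minus_center_le[OF v]) simp
    also have "\<dots> = \<bar>K / (real r * real (dg v)) * (\<sigma> T v * (\<Sum>u\<in>\<N> v. \<sigma> T u))\<bar>"
      using K_pos by (simp add: abs_mult)
    finally have "(\<sigma> T v * (interference v T - center (part_of P v)))\<^sup>2
        \<le> (K / (real r * real (dg v)) * (\<sigma> T v * (\<Sum>u\<in>\<N> v. \<sigma> T u)))\<^sup>2"
      by (simp only: abs_le_square_iff)
    then show "(\<sigma> T v * (interference v T - center (part_of P v)))\<^sup>2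
        \<le> (K / (real r * real (dg v)))\<^sup>2 * ((\<sigma> T v)\<^sup>2 * (\<Sum>u\<in>\<N> v. \<sigma> T u)\<^sup>2)"
      by (simp only: power_mult_distrib)
  qed
  also have "\<dots> \<le> (K / (real r * real (dg v)))\<^sup>2 * (N * ((real p * real q)\<^sup>2 * real (dg v)
      + real (card (\<N> v \<inter> part_of P v)) / (real (card (part_of P v)) - 1) * ((real q - real p)\<^sup>2 * real p * real q)))"
    using sum_sgn_T_square_mult_square_sum_le[OF nbhd_subset v not_in_nbhd]
    by (simp add: sum_distrib_left[symmetric] deg_def Int_commute mult_left_mono)
  finally show ?thesis .
qed

lemma L2_set_sgn_T_mult_deviation_le:
  assumes v: "v \<in> V"
  shows "L2_set (\<lambda>T. \<sigma> T v * (interference v T - center (part_of P v))) \<D>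
    \<le> sqrt N * (4 * K * (real p * real q) / (real r * sqrt (real (dg v)))
      + K * (real r - 1) * real (card (\<N> v \<inter> part_of P v)) / ((real (card (part_of P v)) - 1) * real (dg v)))"
proof -
  define d where "d = real (dg v)"
  define k where "k = real (card (\<N> v \<inter> part_of P v))"
  define m where "m = real (card (part_of P v))"
  define C where "C = K / (real r * d)"
  have d: "d \<ge> 1" using deg_pos[OF v] by (simp add: d_def)
  have m: "m - 1 > 0" using card_part_minus_1_pos[OF part_of_in[OF v]] by (simp add: m_def)
  have r: "real r > 0" using r_ge_2 by simp
  have C: "C \<ge> 0" using K_pos r d by (simp add: C_def)
  have "L2_set (\<lambda>T. \<sigma> T v * (interference v T - center (part_of P v))) \<D>
      \<le> sqrt (C\<^sup>2 * (N * ((real p * real q)\<^sup>2 * d + k / (m - 1) * ((real q - real p)\<^sup>2 * real p * real q))))"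
    unfolding L2_set_def C_def d_def k_def m_def
    by (rule real_sqrt_le_mono[OF sum_square_sgn_T_mult_deviation_le[OF v]])
  also have "\<dots> = C * sqrt N * sqrt ((real p * real q)\<^sup>2 * d + k / (m - 1) * ((real q - real p)\<^sup>2 * real p * real q))"
    using C by (simp add: real_sqrt_mult)
  also have "\<dots> \<le> C * sqrt N * (4 * (real p * real q) * sqrt d + (real p + real q) * (real p + real q - 1) * (k / (m - 1)))"
    using sqrt_moment_bound[of "real p" "real q" d "k / (m - 1)"] p_pos q_pos d m C
    by (intro mult_left_mono) (auto simp: k_def)
  also have "\<dots> = sqrt N * (4 * K * (real p * real q) / (real r * sqrt d) + K * (real r - 1) * k / ((m - 1) * d))"
  proof -
    have s: "sqrt d > 0" "d = sqrt d * sqrt d" using d by simp_all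
    have "C * (4 * (real p * real q) * sqrt d) = 4 * K * (real p * real q) / (real r * sqrt d)"
      unfolding C_def by (subst (2) s(2)) (use s(1) r in \<open>simp add: field_simps\<close>)
    moreover have "C * ((real p + real q) * (real p + real q - 1) * (k / (m - 1))) = K * (real r - 1) * k / ((m - 1) * d)"
    proof -
      have "real p + real q = real r" by (simp add: r_eq)
      then show ?thesis unfolding C_def using r m d by (simp add: field_simps)
    qed
    ultimately show ?thesis by (simp only: distrib_left mult.assoc mult.left_commute[of C])
  qed
  finally show ?thesis by (simp add: d_def k_def m_def)
qed

subsection \<open>Bias and root mean squared error\<close>

definition t_bar :: real where
  "t_bar = (\<Sum>v\<in>V. t v) / real (r * n)"

definition eps :: "'a \<Rightarrow> real" where
  "eps v = x v - avg_on (part_of P v) x + (real q / real r) * (t v - avg_on (part_of P v) t)"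

definition linear_term :: "'a set \<Rightarrow> real" where
  "linear_term T = (\<Sum>v\<in>V. \<sigma> T v * eps v)"

definition interference_term :: "'a set \<Rightarrow> real" where
  "interference_term T = (\<Sum>v\<in>V. \<sigma> T v * (interference v T - center (part_of P v)))"

lemma sum_eps_part:
  assumes \<pi>: "\<pi> \<in> P"
  shows "(\<Sum>v\<in>\<pi>. eps v) = 0"
proof -
  have "(\<Sum>v\<in>\<pi>. eps v) = (\<Sum>v\<in>\<pi>. x v - avg_on \<pi> x + (real q / real r) * (t v - avg_on \<pi> t))"
    by (rule sum.cong) (simp_all add: eps_def part_of_eq[OF \<pi>])
  also have "\<dots> = (\<Sum>v\<in>\<pi>. x v - avg_on \<pi> x) + (real q / real r) * (\<Sum>v\<in>\<pi>. t v - avg_on \<pi> t)"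
    by (simp only: sum.distrib sum_distrib_left)
  also have "\<dots> = 0"
    using finite_part[OF \<pi>] card_part_ge[OF \<pi>] r_ge_2 by (simp add: sum_subtractf avg_on_def)
  finally show ?thesis .
qed

lemma sgn_T_mult_outcome:
  "\<sigma> T v * outcome V E P x t f T v
    = \<sigma> T v * eps v + \<sigma> T v * (avg_on (part_of P v) x + (real q / real r) * avg_on (part_of P v) t
        + center (part_of P v))
      + (real p * real q / real r) * t v + \<sigma> T v * (interference v T - center (part_of P v))"
proof -
  have r: "real r = real p + real q" "real p + real q > 0" using r_eq p_pos by simp_all
  have "\<sigma> T v * (if v \<in> T then t v else 0) = \<sigma> T v * (real q / real r) * t v + (real p * real q / real r) * t v"
  proof (cases "v \<in> T")
    case True
    have "real q = (real q * real q + real p * real q) / real r" using r by (simp add: field_simps)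
    then have "real q * t v = real q * (real q / real r) * t v + real p * real q / real r * t v"
      by (metis add_divide_distrib distrib_right times_divide_eq_right)
    then show ?thesis using True by (simp add: sgn_T_def)
  qed (simp add: sgn_T_def)
  then show ?thesis by (simp add: outcome_def interference_def eps_def algebra_simps)
qed

lemma neyman_minus_t_bar:
  assumes T: "T \<in> \<D>"
  shows "neyman V E P n p q x t f T - t_bar = (linear_term T + interference_term T) / (real p * real q * real n)"
proof -
  have "(\<Sum>v\<in>V. \<sigma> T v * outcome V E P x t f T v)
      = linear_term T + (real p * real q / real r) * (\<Sum>v\<in>V. t v) + interference_term T"
    using sum_sgn_T_mult_part_function[OF T,
        of "\<lambda>\<pi>. avg_on \<pi> x + (real q / real r) * avg_on \<pi> t + center \<pi>"]
    by (simp add: sgn_T_mult_outcome sum.distrib sum_distrib_left linear_term_def interference_term_def)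
  then show ?thesis
    using p_pos q_pos n_pos r_ge_2 by (simp add: neyman_def t_bar_def field_simps)
qed

lemma sum_linear_term: "(\<Sum>T\<in>\<D>. linear_term T) = 0"
proof -
  have "(\<Sum>T\<in>\<D>. linear_term T) = (\<Sum>v\<in>V. eps v * (\<Sum>T\<in>\<D>. \<sigma> T v))"
    unfolding linear_term_def by (subst sum.swap) (simp add: sum_distrib_left mult.commute)
  then show ?thesis by (simp add: sum_sgn_T)
qed

lemma sum_interference_term:
  "(\<Sum>T\<in>\<D>. interference_term T) = (\<Sum>v\<in>V. \<Sum>T\<in>\<D>. \<sigma> T v * interference v T)"
proof -
  have "(\<Sum>T\<in>\<D>. interference_term T)
      = (\<Sum>v\<in>V. (\<Sum>T\<in>\<D>. \<sigma> T v * interference v T) - center (part_of P v) * (\<Sum>T\<in>\<D>. \<sigma> T v))"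
    unfolding interference_term_def
    by (subst sum.swap) (simp add: right_diff_distrib sum_subtractf sum_distrib_left mult.commute)
  then show ?thesis by (simp add: sum_sgn_T)
qed

lemma abs_sum_sgn_T_mult_interference_le_inverse:
  assumes v: "v \<in> V"
  shows "\<bar>\<Sum>T\<in>\<D>. \<sigma> T v * interference v T\<bar>
    \<le> K * N * (real p * real q) / real r * (1 / (real (card (part_of P v)) - 1))"
proof -
  have "real (card (\<N> v \<inter> part_of P v)) \<le> real (dg v)"
    unfolding deg_def using finite_nbhd by (simp add: card_mono)
  then have "real (card (\<N> v \<inter> part_of P v)) * (K / real (dg v)) \<le> K"
    using deg_pos[OF v] K_pos by (simp add: field_simps)
  then have "real (card (\<N> v \<inter> part_of P v)) * (K / real (dg v))
      * (N * (real p * real q) / (real r * (real (card (part_of P v)) - 1)))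
    \<le> K * (N * (real p * real q) / (real r * (real (card (part_of P v)) - 1)))"
    using card_part_minus_1_pos[OF part_of_in[OF v]] r_ge_2 by (intro mult_right_mono) simp_all
  then show ?thesis using abs_sum_sgn_T_mult_interference_le[OF v] by simp
qed

lemma sum_inverse_card_part_le: "(\<Sum>v\<in>V. 1 / (real (card (part_of P v)) - 1)) \<le> 2 * real (card P)"
proof -
  have "(\<Sum>v\<in>V. 1 / (real (card (part_of P v)) - 1)) = (\<Sum>\<pi>\<in>P. \<Sum>v\<in>\<pi>. 1 / (real (card (part_of P v)) - 1))"
    using sum.partition[OF finite_V partition] .
  also have "\<dots> = (\<Sum>\<pi>\<in>P. real (card \<pi>) / (real (card \<pi>) - 1))"
    by (rule sum.cong[OF refl]) (simp add: part_of_eq)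
  also have "\<dots> \<le> (\<Sum>\<pi>\<in>P. 2)"
  proof (rule sum_mono)
    fix \<pi> assume "\<pi> \<in> P"
    then have "real (card \<pi>) \<ge> 2" using card_part_ge r_ge_2 by fastforce
    then show "real (card \<pi>) / (real (card \<pi>) - 1) \<le> 2" by (simp add: divide_simps)
  qed
  finally show ?thesis by simp
qed

theorem bias_bound:
  "\<bar>E_T V P p r (neyman V E P n p q x t f) - t_bar\<bar> \<le> K * real (card P) / real n"
proof -
  have "E_T V P p r (neyman V E P n p q x t f) - t_bar
      = (\<Sum>T\<in>\<D>. neyman V E P n p q x t f T - t_bar) / N"
    using card_designs_pos by (simp add: E_T_def sum_subtractf field_simps)
  also have "\<dots> = (\<Sum>v\<in>V. \<Sum>T\<in>\<D>. \<sigma> T v * interference v T) / (real p * real q * real n * N)"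
    by (simp add: neyman_minus_t_bar sum_divide_distrib[symmetric] sum.distrib sum_linear_term
        sum_interference_term)
  finally have bias: "\<bar>E_T V P p r (neyman V E P n p q x t f) - t_bar\<bar>
      = \<bar>\<Sum>v\<in>V. \<Sum>T\<in>\<D>. \<sigma> T v * interference v T\<bar> / (real p * real q * real n * N)"
    by (simp add: abs_divide)
  have "\<bar>\<Sum>v\<in>V. \<Sum>T\<in>\<D>. \<sigma> T v * interference v T\<bar>
      \<le> (\<Sum>v\<in>V. K * N * (real p * real q) / real r * (1 / (real (card (part_of P v)) - 1)))"
    by (rule order_trans[OF sum_abs sum_mono]) (rule abs_sum_sgn_T_mult_interference_le_inverse)
  also have "\<dots> \<le> K * N * (real p * real q) / real r * (2 * real (card P))"
    unfolding sum_distrib_left[symmetric] using K_pos r_ge_2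
    by (intro mult_left_mono sum_inverse_card_part_le) simp
  also have "\<dots> \<le> real p * real q * real n * N * (K * real (card P) / real n)"
  proof -
    have "2 * (real (card P) * N) \<le> real r * (real (card P) * N)"
      using r_ge_2 by (intro mult_right_mono) simp_all
    then show ?thesis using K_pos n_pos r_ge_2 p_pos q_pos by (simp add: field_simps)
  qed
  finally show ?thesis
    unfolding bias using p_pos q_pos n_pos card_designs_pos by (simp add: divide_le_eq mult.commute)
qed

lemma L2_set_linear_term_le:
  "L2_set linear_term \<D> \<le> sqrt (2 * (real p * real q * N) * (\<Sum>v\<in>V. (eps v)\<^sup>2))"
  unfolding L2_set_def linear_term_def
  by (intro real_sqrt_le_mono sum_square_sum_sgn_T_mult_le sum_eps_part)

lemma L2_set_interference_term_le:
  "L2_set interference_term \<D>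
    \<le> sqrt N * (\<Sum>v\<in>V. 4 * K * (real p * real q) / (real r * sqrt (real (dg v)))
      + K * (real r - 1) * real (card (\<N> v \<inter> part_of P v)) / ((real (card (part_of P v)) - 1) * real (dg v)))"
proof -
  have "L2_set interference_term \<D>
      \<le> (\<Sum>v\<in>V. L2_set (\<lambda>T. \<sigma> T v * (interference v T - center (part_of P v))) \<D>)"
    unfolding interference_term_def by (rule L2_set_sum_le[OF finite_V])
  also have "\<dots> \<le> (\<Sum>v\<in>V. sqrt N * (4 * K * (real p * real q) / (real r * sqrt (real (dg v)))
      + K * (real r - 1) * real (card (\<N> v \<inter> part_of P v)) / ((real (card (part_of P v)) - 1) * real (dg v))))"
    by (rule sum_mono) (rule L2_set_sgn_T_mult_deviation_le)
  finally show ?thesis by (simp add: sum_distrib_left)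
qed

lemma sqrt_E_T_square_le:
  "sqrt (E_T V P p r (\<lambda>T. (neyman V E P n p q x t f T - t_bar)\<^sup>2))
    \<le> (L2_set linear_term \<D> + L2_set interference_term \<D>) / (real p * real q * real n * sqrt N)"
proof -
  have c: "real p * real q * real n > 0" using p_pos q_pos n_pos by simp
  have "E_T V P p r (\<lambda>T. (neyman V E P n p q x t f T - t_bar)\<^sup>2)
      = (\<Sum>T\<in>\<D>. (linear_term T + interference_term T)\<^sup>2) / (real p * real q * real n)\<^sup>2 / N"
    by (simp add: E_T_def neyman_minus_t_bar power_divide sum_divide_distrib[symmetric])
  then have "sqrt (E_T V P p r (\<lambda>T. (neyman V E P n p q x t f T - t_bar)\<^sup>2))
      = L2_set (\<lambda>T. linear_term T + interference_term T) \<D> / (real p * real q * real n * sqrt N)"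
    using c by (simp add: L2_set_def real_sqrt_divide real_sqrt_mult)
  also have "\<dots> \<le> (L2_set linear_term \<D> + L2_set interference_term \<D>) / (real p * real q * real n * sqrt N)"
    using c card_designs_pos by (intro divide_right_mono L2_set_triangle_ineq) simp
  finally show ?thesis .
qed

theorem rmse_bound:
  "sqrt (E_T V P p r (\<lambda>T. (neyman V E P n p q x t f T - t_bar)\<^sup>2))
    \<le> (1 / real (r * n)) * (\<Sum>v\<in>V. 4 * K / sqrt (real (dg v)))
      + (K / (real p * real q * real n)) *
          (\<Sum>v\<in>V. (real r - 1) * real (card (part_of P v \<inter> \<N> v))
                    / ((real (card (part_of P v)) - 1) * real (dg v)))
      + sqrt ((\<Sum>v\<in>V. (eps v)\<^sup>2) / real (r * n)) * sqrt (2 * real r) / sqrt (real p * real q * real n)"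
proof -
  define S where "S = (\<Sum>v\<in>V. (eps v)\<^sup>2)"
  define c where "c = real p * real q * real n"
  define B where "B v = 4 * K * (real p * real q) / (real r * sqrt (real (dg v)))
    + K * (real r - 1) * real (card (\<N> v \<inter> part_of P v)) / ((real (card (part_of P v)) - 1) * real (dg v))"
    for v
  have c: "c > 0" using p_pos q_pos n_pos by (simp add: c_def)
  have N: "sqrt N > 0" using card_designs_pos by simp
  have S: "S \<ge> 0" by (simp add: S_def sum_nonneg)
  have "sqrt (E_T V P p r (\<lambda>T. (neyman V E P n p q x t f T - t_bar)\<^sup>2))
      \<le> (L2_set linear_term \<D> + L2_set interference_term \<D>) / (c * sqrt N)"
    unfolding c_def by (rule sqrt_E_T_square_le)
  also have "\<dots> \<le> (sqrt (2 * (real p * real q * N) * S) + sqrt N * (\<Sum>v\<in>V. B v)) / (c * sqrt N)"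
    using c N L2_set_linear_term_le L2_set_interference_term_le
    by (intro divide_right_mono add_mono) (simp_all add: S_def B_def)
  also have "\<dots> = sqrt (2 * (real p * real q * N) * S) / (c * sqrt N) + (\<Sum>v\<in>V. B v / c)"
    using N by (simp add: add_divide_distrib sum_divide_distrib)
  also have "sqrt (2 * (real p * real q * N) * S) / (c * sqrt N)
      = sqrt (S / real (r * n)) * sqrt (2 * real r) / sqrt c"
  proof (rule power2_eq_imp_eq)
    show "(sqrt (2 * (real p * real q * N) * S) / (c * sqrt N))\<^sup>2
        = (sqrt (S / real (r * n)) * sqrt (2 * real r) / sqrt c)\<^sup>2"
      using S c card_designs_pos r_ge_2 p_pos q_pos n_pos
      by (simp add: c_def power_divide power_mult_distrib field_simps power2_eq_square)
  qed (use S c N in simp_all)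
  also have "(\<Sum>v\<in>V. B v / c) = (\<Sum>v\<in>V. (1 / real (r * n)) * (4 * K / sqrt (real (dg v)))
      + (K / (real p * real q * real n)) * ((real r - 1) * real (card (part_of P v \<inter> \<N> v))
        / ((real (card (part_of P v)) - 1) * real (dg v))))"
  proof (rule sum.cong[OF refl])
    fix v assume v: "v \<in> V"
    show "B v / c = (1 / real (r * n)) * (4 * K / sqrt (real (dg v)))
      + (K / (real p * real q * real n)) * ((real r - 1) * real (card (part_of P v \<inter> \<N> v))
        / ((real (card (part_of P v)) - 1) * real (dg v)))"
      using p_pos q_pos n_pos r_ge_2 deg_pos[OF v] card_part_minus_1_pos[OF part_of_in[OF v]]
      by (simp add: B_def c_def Int_commute field_simps)
  qed
  finally show ?thesis by (simp add: S_def c_def sum.distrib sum_distrib_left)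
qed

end

theorem mainTheorem5:
  fixes V :: "'a set" and E :: "'a \<Rightarrow> 'a \<Rightarrow> bool" and P :: "'a set set"
    and n p q r :: nat and x t :: "'a \<Rightarrow> real" and f :: "'a set \<Rightarrow> nat \<Rightarrow> nat \<Rightarrow> real"
    and K :: real
  assumes n_pos: "n > 0" and p_pos: "p > 0" and q_pos: "q > 0" and r_def: "r = p + q"
    and graph: "simple_graph V E"
    and card_V: "card V = r * n"
    and no_isolated: "\<forall>v\<in>V. \<exists>u. E v u"
    and partition: "partition_on V P"
    and divisible: "\<forall>\<pi>\<in>P. r dvd card \<pi>"
    and f_empty: "\<forall>\<pi>\<in>P. \<forall>v\<in>\<pi>. f \<pi> 0 (deg V E v) = 0"
    and K_pos: "K > 0"
    and lipschitz: "\<forall>\<pi>\<in>P. \<forall>a b c d. (a, b) \<in> Bset V E \<pi> \<longrightarrow> (c, d) \<in> Bset V E \<pi> \<longrightarrow>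
        \<bar>f \<pi> a b - f \<pi> c d\<bar> \<le> K * \<bar>real a / real (a + b) - real c / real (c + d)\<bar>"
  shows
    "let tbar = (\<Sum>v\<in>V. t v) / real (r * n);
         est = neyman V E P n p q x t f;
         eps = (\<lambda>v. x v - avg_on (part_of P v) x
                   + (real q / real r) * (t v - avg_on (part_of P v) t));
         \<sigma> = sqrt ((\<Sum>v\<in>V. (eps v)\<^sup>2) / real (r * n))
     in \<bar>E_T V P p r est - tbar\<bar> \<le> K * real (card P) / real n
      \<and> sqrt (E_T V P p r (\<lambda>T. (est T - tbar)\<^sup>2))
          \<le> (1 / real (r * n)) * (\<Sum>v\<in>V. 4 * K / sqrt (real (deg V E v)))
            + (K / (real p * real q * real n)) *
                (\<Sum>v\<in>V. (real r - 1) * real (card (part_of P v \<inter> nbhd V E v))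
                          / ((real (card (part_of P v)) - 1) * real (deg V E v)))
            + \<sigma> * sqrt (2 * real r) / sqrt (real p * real q * real n)"
proof -
  interpret interference_model V P p q r E n x t f K
    using assms by unfold_locales (simp_all add: simple_graph_def)
  show ?thesis
    using bias_bound rmse_bound unfolding Let_def t_bar_def eps_def by simp
qed

end
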